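(* Let $(\mathcal{C},\mathcal{B},Q,S)$ be an STV election, counted by the procedure described in the context. Let $w\in\mathcal{C}$ and $O\subseteq\mathcal{C}$, and suppose that $L_{\mathrm{basic}}(w)>U_{\mathrm{comp}}(o,w)$ (the assertion $\mathsf{AG}(w,o)$) holds for every $o\in O$. Then $L_{\mathrm{elim}}(w,O)$ is a lower bound on the tally of $w$ at any point of the count at which $w$ could be eliminated.
   Context: An STV election is a tuple $(\mathcal{C},\mathcal{B},Q,S)$ where $\mathcal{C}$ is a finite set of candidates, $\mathcal{B}$ is a multiset of ballots (each ballot is a finite sequence of distinct candidates, in order of preference, most preferred first, not necessarily containing all candidates), $S$ is the number of seats, and $Q=\lfloor |\mathcal{B}|/(S+1)\rfloor+1$ is the quota. For a sequence $\pi$, $\mathrm{first}(\pi)$ is its first element, and for a set $X$ of candidates, $\sigma_X(\pi)$ is the subsequence of $\pi$ consisting of the elements of $X$, in their original order. Counting: every ballot starts with value $1$ and is placed in the pile of its first-ranked candidate; a candidate's tally is the total value of the ballots in its pile. A candidate is eligible if neither eliminated nor seated. In each round every eligible candidate with tally at least $Q$ is seated (gets a quota), and the ballots in its pile get a reduced transfer value (e.g. unweighted Gregory: $(V_c-Q)/|\mathcal{B}_c|$, with $V_c$ the total value and $|\mathcal{B}_c|$ the number of ballots in its pile) and move to the next-ranked eligible candidate on each ballot (or are exhausted). If no candidate reaches a quota, the eligible candidate with smallest tally is eliminated and its ballots move at their current value to their next-ranked eligible candidate (or are exhausted). Counting stops when all $S$ seats are filled or the number of eligible candidates equals the number of unfilled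 seats, in which case all remaining eligible candidates are seated. Definitions (counts with multiplicity): $L_{\mathrm{basic}}(c)=|\{\beta\in\mathcal{B}:\mathrm{first}(\beta)=c\}|$; $U_{\mathrm{comp}}(c,c')=|\{\beta\in\mathcal{B}:\mathrm{first}(\sigma_{\{c,c'\}}(\beta))=c\}|$; $L_{\mathrm{elim}}(w,O)=|\{\beta\in\mathcal{B}:\mathrm{first}(\sigma_{\mathcal{C}\setminus O}(\beta))=w\}|$. *)

theory Defs
  imports Main "HOL.Real"
begin

text \<open>Ballots are lists of candidates; the multiset of ballots is represented by a
list of ballots (positions give ballot identity, multiplicities are preserved).\<close>

definition first :: "'c list \<Rightarrow> 'c option" where
  "first \<pi> = (case \<pi> of [] \<Rightarrow> None | x # _ \<Rightarrow> Some x)"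

definition sigma :: "'c set \<Rightarrow> 'c list \<Rightarrow> 'c list" where
  "sigma X \<pi> = filter (\<lambda>x. x \<in> X) \<pi>"

definition quota :: "'c list list \<Rightarrow> nat \<Rightarrow> nat" where
  "quota bs S = length bs div (S + 1) + 1"

definition L_basic :: "'c list list \<Rightarrow> 'c \<Rightarrow> nat" where
  "L_basic bs c = length (filter (\<lambda>\<beta>. first \<beta> = Some c) bs)"

definition U_comp :: "'c list list \<Rightarrow> 'c \<Rightarrow> 'c \<Rightarrow> nat" where
  "U_comp bs c c' = length (filter (\<lambda>\<beta>. first (sigma {c, c'} \<beta>) = Some c) bs)"

definition L_elim :: "'c set \<Rightarrow> 'c list list \<Rightarrow> 'c \<Rightarrow> 'c set \<Rightarrow> nat" where
  "L_elim C bs w Os = length (filter (\<lambda>\<beta>. first (sigma (C - Os) \<beta>) = Some w) bs)"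

text \<open>State of the count: seated candidates, eliminated candidates, and the current
value of each ballot (indexed by its position in the ballot list).\<close>

record 'c stv_state =
  elected :: "'c set"
  excluded :: "'c set"
  bvalue :: "nat \<Rightarrow> real"

definition eligible :: "'c set \<Rightarrow> 'c stv_state \<Rightarrow> 'c set" where
  "eligible C s = C - elected s - excluded s"

definition holder :: "'c set \<Rightarrow> 'c list list \<Rightarrow> 'c stv_state \<Rightarrow> nat \<Rightarrow> 'c option" where
  "holder C bs s i = first (sigma (eligible C s) (bs ! i))"

definition pile :: "'c set \<Rightarrow> 'c list list \<Rightarrow> 'c stv_state \<Rightarrow> 'c \<Rightarrow> nat set" where
  "pile C bs s c = {i. i < length bs \<and> holder C bs s i = Some c}"

definition tally :: "'c set \<Rightarrow> 'c list list \<Rightarrow> 'c stv_state \<Rightarrow> 'c \<Rightarrow> real" where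
  "tally C bs s c = (\<Sum>i \<in> pile C bs s c. bvalue s i)"

definition init_state :: "'c stv_state" where
  "init_state = \<lparr>elected = {}, excluded = {}, bvalue = (\<lambda>_. 1)\<rparr>"

definition continuing :: "'c set \<Rightarrow> nat \<Rightarrow> 'c stv_state \<Rightarrow> bool" where
  "continuing C S s \<longleftrightarrow> card (elected s) < S \<and> card (eligible C s) > S - card (elected s)"

definition gregory_values ::
  "'c set \<Rightarrow> 'c list list \<Rightarrow> nat \<Rightarrow> 'c stv_state \<Rightarrow> 'c set \<Rightarrow> nat \<Rightarrow> real" where
  "gregory_values C bs S s Sn = (\<lambda>i. case holder C bs s i of
      Some c \<Rightarrow> (if c \<in> Sn
                 then (tally C bs s c - real (quota bs S)) / real (card (pile C bs s c))
                 else bvalue s i)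
    | None \<Rightarrow> bvalue s i)"

inductive stv_step :: "'c set \<Rightarrow> 'c list list \<Rightarrow> nat \<Rightarrow> 'c stv_state \<Rightarrow> 'c stv_state \<Rightarrow> bool"
  for C bs S where
  seat: "\<lbrakk> continuing C S s;
           Sn = {c \<in> eligible C s. tally C bs s c \<ge> real (quota bs S)};
           Sn \<noteq> {} \<rbrakk> \<Longrightarrow>
         stv_step C bs S s
           \<lparr>elected = elected s \<union> Sn, excluded = excluded s,
            bvalue = gregory_values C bs S s Sn\<rparr>"
| elim: "\<lbrakk> continuing C S s;
           \<forall>d \<in> eligible C s. tally C bs s d < real (quota bs S);
           c \<in> eligible C s;
           \<forall>d \<in> eligible C s. tally C bs s c \<le> tally C bs s d \<rbrakk> \<Longrightarrow>
         stv_step C bs S s (s\<lparr>excluded := excluded s \<union> {c}\<rparr>)"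
| fill: "\<lbrakk> card (elected s) < S; \<not> continuing C S s \<rbrakk> \<Longrightarrow>
         stv_step C bs S s (s\<lparr>elected := elected s \<union> eligible C s\<rparr>)"

definition reachable :: "'c set \<Rightarrow> 'c list list \<Rightarrow> nat \<Rightarrow> 'c stv_state \<Rightarrow> bool" where
  "reachable C bs S s \<longleftrightarrow> (stv_step C bs S)\<^sup>*\<^sup>* init_state s"

definition could_be_eliminated :: "'c set \<Rightarrow> 'c list list \<Rightarrow> nat \<Rightarrow> 'c stv_state \<Rightarrow> 'c \<Rightarrow> bool" where
  "could_be_eliminated C bs S s w \<longleftrightarrow>
     continuing C S s \<and>
     (\<forall>d \<in> eligible C s. tally C bs s d < real (quota bs S)) \<and>
     w \<in> eligible C s \<and>
     (\<forall>d \<in> eligible C s. tally C bs s w \<le> tally C bs s d)"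

end

theory Submission
  imports Defs
begin

(* While w is eligible, its pile holds the L_basic(w) ballots ranking it first at
   full value, whereas any other eligible candidate o holds only ballots preferring o
   to w, each worth at most 1, so at most U_comp(o,w) in total.  Under AG(w,o) the
   tally of o therefore stays strictly below that of w.  Consequently no o in O reaches
   a quota unless w is seated in the same round, so the ballots whose first choice
   outside O is w, which always sit with w or with a candidate of O, keep value 1 while
   w is eligible; and when w has a smallest tally no candidate of O is eligible any
   more, so all these ballots lie in the pile of w. *)

lemma first_sigma_SomeD: "first (sigma E b) = Some x \<Longrightarrow> x \<in> E \<and> x \<in> set b"
  by (induction b) (auto simp: first_def sigma_def split: if_splits)

lemma first_sigma_subset:
  "first (sigma E b) = Some x \<Longrightarrow> F \<subseteq> E \<Longrightarrow> x \<in> F \<Longrightarrow> first (sigma F b) = Some x"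
  by (induction b) (auto simp: first_def sigma_def split: if_splits)

lemma first_sigma_of_first: "first b = Some x \<Longrightarrow> x \<in> E \<Longrightarrow> first (sigma E b) = Some x"
  by (cases b) (auto simp: first_def sigma_def)

lemma first_sigma_eq_or_notin:
  "first (sigma X b) = Some x \<Longrightarrow> x \<in> E \<Longrightarrow>
   \<exists>y. first (sigma E b) = Some y \<and> (y = x \<or> y \<notin> X)"
  by (induction b) (auto simp: first_def sigma_def split: if_splits)

lemma sigma_UNIV [simp]: "sigma UNIV b = b"
  by (simp add: sigma_def)

lemma L_basic_le_U_comp_self: "L_basic bs w \<le> U_comp bs w w"
  unfolding L_basic_def U_comp_def length_filter_conv_card
  by (rule card_mono) (auto intro: first_sigma_of_first)

lemma finite_pile: "finite (pile C bs s c)"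
  by (simp add: pile_def)

lemma tally_le_card_pile:
  assumes "\<forall>i. bvalue s i \<le> 1"
  shows "tally C bs s c \<le> real (card (pile C bs s c))"
proof -
  have "tally C bs s c \<le> (\<Sum>i\<in>pile C bs s c. 1)"
    unfolding tally_def by (rule sum_mono) (use assms in auto)
  then show ?thesis by simp
qed

lemma card_le_tally:
  assumes "T \<subseteq> pile C bs s c" "\<forall>i. 0 \<le> bvalue s i" "\<forall>i\<in>T. bvalue s i = 1"
  shows "real (card T) \<le> tally C bs s c"
proof -
  have "real (card T) = (\<Sum>i\<in>T. bvalue s i)" using assms(3) by simp
  also have "\<dots> \<le> tally C bs s c"
    unfolding tally_def by (rule sum_mono2[OF finite_pile assms(1)]) (use assms(2) in auto)
  finally show ?thesis .
qed

lemma tally_le_U_comp: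
  assumes "\<forall>i. bvalue s i \<le> 1" "w \<in> eligible C s" "c \<in> eligible C s"
  shows "tally C bs s c \<le> real (U_comp bs c w)"
proof -
  let ?P = "{i. i < length bs \<and> first (sigma {c, w} (bs ! i)) = Some c}"
  have "pile C bs s c \<subseteq> ?P"
    using assms(2,3) by (auto simp: pile_def holder_def intro: first_sigma_subset)
  then have "card (pile C bs s c) \<le> U_comp bs c w"
    unfolding U_comp_def length_filter_conv_card by (intro card_mono) auto
  with tally_le_card_pile[OF assms(1)] show ?thesis
    by (meson of_nat_le_iff order_trans)
qed

lemma card_first_sigma_le_tally:
  assumes "w \<in> eligible C s" "eligible C s \<subseteq> X" "\<forall>i. 0 \<le> bvalue s i"
    and "\<forall>i<length bs. first (sigma X (bs ! i)) = Some w \<longrightarrow> bvalue s i = 1"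
  shows "real (length (filter (\<lambda>\<beta>. first (sigma X \<beta>) = Some w) bs)) \<le> tally C bs s w"
proof -
  let ?T = "{i. i < length bs \<and> first (sigma X (bs ! i)) = Some w}"
  have "?T \<subseteq> pile C bs s w"
    using assms(1,2) by (auto simp: pile_def holder_def intro: first_sigma_subset)
  then have "real (card ?T) \<le> tally C bs s w"
    using assms(3,4) by (intro card_le_tally) auto
  then show ?thesis by (simp add: length_filter_conv_card)
qed

lemma gregory_values_bounds:
  assumes "\<forall>i. 0 \<le> bvalue s i \<and> bvalue s i \<le> 1"
    and "\<forall>c\<in>Sn. tally C bs s c \<ge> real (quota bs S)"
  shows "0 \<le> gregory_values C bs S s Sn i \<and> gregory_values C bs S s Sn i \<le> 1"
proof (cases "\<exists>c. holder C bs s i = Some c \<and> c \<in> Sn")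
  case True
  then obtain c where c: "holder C bs s i = Some c" "c \<in> Sn" by blast
  have quota: "real (quota bs S) \<le> tally C bs s c" "1 \<le> real (quota bs S)"
    using assms(2) c(2) by (auto simp: quota_def)
  have "tally C bs s c \<le> real (card (pile C bs s c))"
    using assms(1) by (intro tally_le_card_pile) auto
  with quota have "(tally C bs s c - real (quota bs S)) / real (card (pile C bs s c)) \<in> {0..1}"
    by (cases "card (pile C bs s c) = 0") (auto simp: divide_le_eq)
  then show ?thesis using c by (simp add: gregory_values_def)
next
  case False
  then have "gregory_values C bs S s Sn i = bvalue s i"
    by (auto simp: gregory_values_def split: option.split)
  then show ?thesis using assms(1) by simp
qed

lemma holder_of_first_in_diff:
  assumes "first (sigma (C - Os) (bs ! i)) = Some w" "w \<in> eligible C s" "set (bs ! i) \<subseteq> C"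
  obtains c where "holder C bs s i = Some c" "c \<in> eligible C s" "c = w \<or> c \<in> Os"
proof -
  obtain c where c: "first (sigma (eligible C s) (bs ! i)) = Some c" "c = w \<or> c \<notin> C - Os"
    using first_sigma_eq_or_notin[OF assms(1,2)] by blast
  moreover have "c \<in> eligible C s" "c \<in> set (bs ! i)"
    using first_sigma_SomeD[OF c(1)] by blast+
  ultimately show thesis
    using that assms(3) by (auto simp: holder_def)
qed

lemma stv_step_eligible_subset: "stv_step C bs S s s' \<Longrightarrow> eligible C s' \<subseteq> eligible C s"
  by (induction rule: stv_step.induct) (auto simp: eligible_def)

lemma reachable_bvalue_bounds:
  assumes "reachable C bs S s"
  shows "\<forall>i. 0 \<le> bvalue s i \<and> bvalue s i \<le> 1"
  using assms[unfolded reachable_def]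
proof (induction rule: rtranclp_induct)
  case base
  then show ?case by (simp add: init_state_def)
next
  case (step s s')
  from step.hyps(2) show ?case
  proof (cases rule: stv_step.cases)
    case (seat Sn)
    then show ?thesis using step.IH gregory_values_bounds[of s Sn] by simp
  qed (use step.IH in simp_all)
qed

definition full_value_while_eligible ::
  "'c set \<Rightarrow> 'c list list \<Rightarrow> 'c set \<Rightarrow> 'c \<Rightarrow> 'c stv_state \<Rightarrow> bool" where
  "full_value_while_eligible C bs Os w s \<longleftrightarrow>
     (w \<in> eligible C s \<longrightarrow>
       (\<forall>i<length bs. first (sigma (C - Os) (bs ! i)) = Some w \<longrightarrow> bvalue s i = 1))"

lemma tally_less_tally_of_U_comp_less_L_basic:
  assumes bounds: "\<forall>i. 0 \<le> bvalue s i \<and> bvalue s i \<le> 1"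
    and full: "full_value_while_eligible C bs Os w s"
    and "w \<in> eligible C s" "w \<notin> Os" "c \<in> eligible C s"
    and "U_comp bs c w < L_basic bs w"
  shows "tally C bs s c < tally C bs s w"
proof -
  have "\<forall>i<length bs. first (bs ! i) = Some w \<longrightarrow> bvalue s i = 1"
    using full assms(3,4) by (auto simp: full_value_while_eligible_def eligible_def
        intro: first_sigma_of_first)
  then have "real (L_basic bs w) \<le> tally C bs s w"
    using card_first_sigma_le_tally[of w C s UNIV] bounds assms(3)
    by (simp add: L_basic_def)
  moreover have "tally C bs s c \<le> real (U_comp bs c w)"
    using bounds assms(3,5) by (intro tally_le_U_comp) auto
  ultimately show ?thesis using assms(6) by linarith
qed

lemma stv_step_full_value_while_eligible:
  assumes step: "stv_step C bs S s s'"
    and bounds: "\<forall>i. 0 \<le> bvalue s i \<and> bvalue s i \<le> 1"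
    and full: "full_value_while_eligible C bs Os w s"
    and ballots: "\<forall>\<beta> \<in> set bs. set \<beta> \<subseteq> C"
    and "w \<notin> Os" and AG: "\<forall>c \<in> Os. L_basic bs w > U_comp bs c w"
  shows "full_value_while_eligible C bs Os w s'"
  using step
proof (cases rule: stv_step.cases)
  case (seat Sn)
  show ?thesis unfolding full_value_while_eligible_def
  proof (intro impI allI)
    fix i
    assume w': "w \<in> eligible C s'" and i: "i < length bs" "first (sigma (C - Os) (bs ! i)) = Some w"
    have w: "w \<in> eligible C s" "w \<notin> Sn"
      using w' seat(1) stv_step_eligible_subset[OF step] by (auto simp: eligible_def)
    have "set (bs ! i) \<subseteq> C" using ballots i(1) by simp
    then obtain c where c: "holder C bs s i = Some c" "c \<in> eligible C s" "c = w \<or> c \<in> Os"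
      using holder_of_first_in_diff[OF i(2) w(1)] by blast
    moreover have "c \<notin> Sn" if "c \<in> Os"
    proof
      assume "c \<in> Sn"
      then have "real (quota bs S) \<le> tally C bs s c" using seat(3) by blast
      also have "\<dots> < tally C bs s w"
        using \<open>c \<in> Os\<close> \<open>c \<in> eligible C s\<close> AG bounds full w(1) \<open>w \<notin> Os\<close>
        by (intro tally_less_tally_of_U_comp_less_L_basic) auto
      finally have "w \<in> Sn" using seat(3) w(1) by simp
      with w(2) show False ..
    qed
    ultimately have "gregory_values C bs S s Sn i = bvalue s i"
      using c(1,3) w(2) by (auto simp: gregory_values_def)
    then show "bvalue s' i = 1"
      using seat(1) full w(1) i by (simp add: full_value_while_eligible_def)
  qed
qed (use full stv_step_eligible_subset[OF step] in \<open>auto simp: full_value_while_eligible_def\<close>)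

lemma reachable_full_value_while_eligible:
  assumes "reachable C bs S s"
    and "\<forall>\<beta> \<in> set bs. set \<beta> \<subseteq> C"
    and "w \<notin> Os" "\<forall>c \<in> Os. L_basic bs w > U_comp bs c w"
  shows "full_value_while_eligible C bs Os w s"
  using assms(1)[unfolded reachable_def]
proof (induction rule: rtranclp_induct)
  case base
  then show ?case by (simp add: full_value_while_eligible_def init_state_def)
next
  case (step s s')
  have bounds: "\<forall>i. 0 \<le> bvalue s i \<and> bvalue s i \<le> 1"
    using step.hyps(1) by (intro reachable_bvalue_bounds) (simp add: reachable_def)
  show ?case
    by (rule stv_step_full_value_while_eligible[OF step.hyps(2) bounds step.IH assms(2-4)])
qed

theorem lemma3:
  fixes C :: "'c set" and bs :: "'c list list" and S :: nat
    and w :: 'c and Os :: "'c set" and s :: "'c stv_state"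
  assumes "finite C"
    and "\<forall>\<beta> \<in> set bs. distinct \<beta> \<and> set \<beta> \<subseteq> C"
    and "w \<in> C" and "Os \<subseteq> C"
    and "\<forall>oc \<in> Os. L_basic bs w > U_comp bs oc w"
    and "reachable C bs S s"
    and "could_be_eliminated C bs S s w"
  shows "real (L_elim C bs w Os) \<le> tally C bs s w"
proof -
  have "w \<notin> Os"
    using assms(5) L_basic_le_U_comp_self[of bs w] by (meson leD)
  have ballots: "\<forall>\<beta> \<in> set bs. set \<beta> \<subseteq> C"
    using assms(2) by blast
  have bounds: "\<forall>i. 0 \<le> bvalue s i \<and> bvalue s i \<le> 1"
    using assms(6) by (rule reachable_bvalue_bounds)
  have full: "full_value_while_eligible C bs Os w s"
    by (rule reachable_full_value_while_eligible[OF assms(6) ballots \<open>w \<notin> Os\<close> assms(5)])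
  have w: "w \<in> eligible C s" "\<forall>c \<in> eligible C s. tally C bs s w \<le> tally C bs s c"
    using assms(7) by (auto simp: could_be_eliminated_def)
  have "eligible C s \<subseteq> C - Os"
  proof
    fix c assume c: "c \<in> eligible C s"
    have "\<not> tally C bs s c < tally C bs s w"
      using w(2) c by (simp add: not_less)
    then have "\<not> U_comp bs c w < L_basic bs w"
      using tally_less_tally_of_U_comp_less_L_basic[OF bounds full w(1) \<open>w \<notin> Os\<close> c] by blast
    then show "c \<in> C - Os"
      using c assms(5) by (auto simp: eligible_def)
  qed
  then show ?thesis
    using card_first_sigma_le_tally[of w C s "C - Os" bs] w(1) bounds full
    by (simp add: L_elim_def full_value_while_eligible_def)
qed

end
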